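(* Let $\mathcal{L}_1,\mathcal{L}_2\in\mathrm{Mat}_d(\mathbb{Z})$ be irreducible and coprime, and let $\Lambda=\mathbb{Z}^d\cap \mathcal{L}_1^{-1}\mathcal{L}_2 \mathbb{Z}^d\cap \mathcal{L}_2^{-1}\mathcal{L}_1 \mathbb{Z}^d$, $\Gamma_1=\Lambda\cap \mathcal{L}_2^{-1}\mathcal{L}_1\Lambda$, $G=\mathbb{Z}^d/\Gamma_1$, and $\phi_1,\phi_2:G\to\mathbb{Z}^d/\mathcal{L}_1\Lambda$ the homomorphisms $\phi_i(x+\Gamma_1)=\mathcal{L}_ix+\mathcal{L}_1\Lambda$. Let $X\subseteq G$ with $0\in X$. Then at least one of the following holds: (1) $X$ does not generate $G$; (2) $|\phi_1(X)+\phi_2(X)|>|X|$; (3) $\Lambda/\Gamma_1\subseteq X$.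
   Context: Irreducible: there are no non-trivial subspaces $U,V$ of $\mathbb{Q}^d$ of the same dimension with $\mathcal{L}_1U\subseteq V$ and $\mathcal{L}_2U\subseteq V$. Coprime: there are no $\mathcal{P},\mathcal{Q}\in \mathrm{GL}_d(\mathbb{Q})$ with $0<|\det(\mathcal{P})\det(\mathcal{Q})|<1$ such that $\mathcal{P}\mathcal{L}_1\mathcal{Q},\mathcal{P}\mathcal{L}_2\mathcal{Q}\in\mathrm{Mat}_d(\mathbb{Z})$. The maps $\phi_1,\phi_2$ are well defined and $\phi_1+\phi_2$ is an isomorphism. *)

theory Defs
  imports "HOL-Analysis.Analysis"
begin

definition ratmat :: "int^'n^'n \<Rightarrow> rat^'n^'n" where
  "ratmat L = (\<chi> i j. of_int (L $ i $ j))"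

definition irreducible_pair :: "int^'n^'n \<Rightarrow> int^'n^'n \<Rightarrow> bool" where
  "irreducible_pair L1 L2 \<longleftrightarrow>
     \<not> (\<exists>U V :: (rat^'n) set.
          vec.subspace U \<and> vec.subspace V \<and> vec.dim U = vec.dim V \<and>
          U \<noteq> {0} \<and> U \<noteq> UNIV \<and> V \<noteq> {0} \<and> V \<noteq> UNIV \<and>
          (\<lambda>u. ratmat L1 *v u) ` U \<subseteq> V \<and> (\<lambda>u. ratmat L2 *v u) ` U \<subseteq> V)"

definition integral_mat :: "rat^'n^'n \<Rightarrow> bool" where
  "integral_mat M \<longleftrightarrow> (\<forall>i j. M $ i $ j \<in> \<int>)"

definition coprime_pair :: "int^'n^'n \<Rightarrow> int^'n^'n \<Rightarrow> bool" where
  "coprime_pair L1 L2 \<longleftrightarrow>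
     \<not> (\<exists>P Q :: rat^'n^'n. invertible P \<and> invertible Q \<and>
          0 < \<bar>det P * det Q\<bar> \<and> \<bar>det P * det Q\<bar> < 1 \<and>
          integral_mat (P ** ratmat L1 ** Q) \<and> integral_mat (P ** ratmat L2 ** Q))"

text \<open>Lambda = Z^d \<inter> L1^{-1} L2 Z^d \<inter> L2^{-1} L1 Z^d (inverse images taken in Q^d).\<close>
definition Lam :: "int^'n^'n \<Rightarrow> int^'n^'n \<Rightarrow> (int^'n) set" where
  "Lam L1 L2 = {x. (\<exists>y. L1 *v x = L2 *v y) \<and> (\<exists>y. L2 *v x = L1 *v y)}"

definition Gam1 :: "int^'n^'n \<Rightarrow> int^'n^'n \<Rightarrow> (int^'n) set" where
  "Gam1 L1 L2 = {x \<in> Lam L1 L2. \<exists>y \<in> Lam L1 L2. L2 *v x = L1 *v y}"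

definition coset :: "'a::ab_group_add set \<Rightarrow> 'a \<Rightarrow> 'a set" where
  "coset H x = (\<lambda>h. x + h) ` H"

definition quot :: "'a::ab_group_add set \<Rightarrow> 'a set \<Rightarrow> 'a set set" where
  "quot A H = coset H ` A"

inductive_set qgen :: "'a::ab_group_add set \<Rightarrow> 'a set set \<Rightarrow> 'a set set"
  for H X where
  zero: "coset H 0 \<in> qgen H X"
| add: "coset H x \<in> X \<Longrightarrow> coset H y \<in> qgen H X \<Longrightarrow> coset H (y + x) \<in> qgen H X"
| sub: "coset H x \<in> X \<Longrightarrow> coset H y \<in> qgen H X \<Longrightarrow> coset H (y - x) \<in> qgen H X"

definition phi_img :: "int^'n^'n \<Rightarrow> int^'n^'n \<Rightarrow> int^'n^'n \<Rightarrow> (int^'n) set set \<Rightarrow> (int^'n) set set" where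
  "phi_img L1 L2 L X =
     {coset ((\<lambda>y. L1 *v y) ` Lam L1 L2) (L *v x) | x. coset (Gam1 L1 L2) x \<in> X}"

definition qsumset :: "'a::ab_group_add set \<Rightarrow> 'a set set \<Rightarrow> 'a set set \<Rightarrow> 'a set set" where
  "qsumset K A B = {coset K (u + v) | u v. coset K u \<in> A \<and> coset K v \<in> B}"

end

theory Submission
  imports Defs
begin

text \<open>Let \<open>\<psi> = \<phi>\<^sub>1 + \<phi>\<^sub>2 : G \<rightarrow> \<int>\<^sup>d / L\<^sub>1\<Lambda>\<close>. It is injective, so
  \<open>\<phi>\<^sub>1(X) + \<phi>\<^sub>2(X) \<supseteq> \<psi>(X)\<close> has at least \<open>|X|\<close> elements, and equality means that for all
  \<open>x, y \<in> X\<close> there is \<open>z \<in> X\<close> with \<open>\<phi>\<^sub>1 x + \<phi>\<^sub>2 y = \<psi> z\<close>. Irreducibility forces \<open>L\<^sub>1, L\<^sub>2\<close>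
  to be nonsingular (for \<open>d = 1\<close> a singular one vanishes and then \<open>\<Lambda> = \<Gamma>\<^sub>1\<close>), so \<open>G\<close> is
  finite and \<open>T = \<psi>\<^sup>-\<^sup>1 \<circ> \<phi>\<^sub>1\<close> is a well-defined endomorphism of \<open>G\<close>. Under the closure property
  the set of \<open>y\<close> with \<open>T (y - T\<^sup>2 y) \<in> X\<close> contains \<open>0\<close> and is stable under adding and
  subtracting elements of \<open>X\<close>, hence is all of \<open>G\<close> when \<open>X\<close> generates \<open>G\<close>. For \<open>l \<in> \<Lambda>\<close>
  choose \<open>g\<close> with \<open>L\<^sub>1 g = L\<^sub>2 l\<close>; then \<open>T g = l\<close> and \<open>T l = 0\<close>, so \<open>l + \<Gamma>\<^sub>1 \<in> X\<close>.\<close>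

definition add_subgroup :: "'a::ab_group_add set \<Rightarrow> bool" where
  "add_subgroup H \<longleftrightarrow> 0 \<in> H \<and> (\<forall>a\<in>H. \<forall>b\<in>H. a - b \<in> H)"

lemma add_subgroup_zero: "add_subgroup H \<Longrightarrow> 0 \<in> H"
  by (simp add: add_subgroup_def)

lemma add_subgroup_diff: "add_subgroup H \<Longrightarrow> a \<in> H \<Longrightarrow> b \<in> H \<Longrightarrow> a - b \<in> H"
  by (simp add: add_subgroup_def)

lemma add_subgroup_uminus: "add_subgroup H \<Longrightarrow> a \<in> H \<Longrightarrow> - a \<in> H"
  using add_subgroup_diff[of H 0 a] by (simp add: add_subgroup_zero)

lemma add_subgroup_add: "add_subgroup H \<Longrightarrow> a \<in> H \<Longrightarrow> b \<in> H \<Longrightarrow> a + b \<in> H"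
  using add_subgroup_diff[of H a "- b"] by (simp add: add_subgroup_uminus)

lemma coset_eq_iff:
  assumes "add_subgroup H"
  shows "coset H x = coset H y \<longleftrightarrow> x - y \<in> H"
proof
  assume "coset H x = coset H y"
  moreover have "x \<in> coset H x"
    using add_subgroup_zero[OF assms] unfolding coset_def by force
  ultimately obtain h where "h \<in> H" "x = y + h"
    unfolding coset_def by auto
  then show "x - y \<in> H" by simp
next
  assume xy: "x - y \<in> H"
  have "coset H x = (\<lambda>h. y + h) ` (\<lambda>h. (x - y) + h) ` H"
    unfolding coset_def image_image by (simp add: algebra_simps)
  also have "(\<lambda>h. (x - y) + h) ` H = H"
  proof
    show "(\<lambda>h. (x - y) + h) ` H \<subseteq> H"
      using add_subgroup_add[OF assms xy] by blast
    show "H \<subseteq> (\<lambda>h. (x - y) + h) ` H"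
    proof
      fix h assume "h \<in> H"
      then have "h - (x - y) \<in> H" using add_subgroup_diff[OF assms _ xy] by blast
      then show "h \<in> (\<lambda>h. (x - y) + h) ` H" by (force intro: image_eqI)
    qed
  qed
  finally show "coset H x = coset H y" by (simp add: coset_def)
qed

lemma finite_range_coset:
  fixes H :: "(int^'n) set"
  assumes "add_subgroup H" "c > 0" "\<And>z. c *s z \<in> H"
  shows "finite (range (coset H))"
proof -
  define B where "B = {x::int^'n. \<forall>i. x $ i \<in> {0..<c}}"
  have "vec_nth ` B \<subseteq> PiE UNIV (\<lambda>_. {0..<c})"
    by (auto simp: B_def PiE_UNIV_domain)
  then have "finite (vec_nth ` B)"
    by (rule finite_subset) (simp add: finite_PiE)
  then have "finite B"
    by (rule finite_imageD) (simp add: inj_on_def vec_nth_inject)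
  moreover have "range (coset H) \<subseteq> coset H ` B"
  proof clarify
    fix x :: "int^'n"
    define r where "r = (\<chi> i. x $ i mod c)"
    have "x - r = c *s (\<chi> i. x $ i div c)"
      unfolding r_def by (simp add: vec_eq_iff minus_mod_eq_mult_div)
    then have "coset H x = coset H r"
      using assms(3) coset_eq_iff[OF assms(1)] by simp
    moreover have "r \<in> B" unfolding r_def B_def using assms(2) by simp
    ultimately show "coset H x \<in> coset H ` B" by blast
  qed
  ultimately show ?thesis by (meson finite_imageI finite_subset)
qed

lemma card_image_eq_if_same_fibres:
  assumes "\<And>x y. x \<in> S \<Longrightarrow> y \<in> S \<Longrightarrow> f x = f y \<longleftrightarrow> g x = g y"
  shows "card (f ` S) = card (g ` S)"
proof -
  have "bij_betw (\<lambda>c. g (inv_into S f c)) (f ` S) (g ` S)"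
  proof (rule bij_betw_imageI)
    show "inj_on (\<lambda>c. g (inv_into S f c)) (f ` S)"
      by (rule inj_onI) (metis assms f_inv_into_f inv_into_into)
    show "(\<lambda>c. g (inv_into S f c)) ` f ` S = g ` S"
      using assms by (auto simp: image_image intro!: image_eqI inv_into_into)
         (metis f_inv_into_f image_eqI inv_into_into)
  qed
  then show ?thesis by (rule bij_betw_same_card)
qed

lemma add_subgroup_Lam: "add_subgroup (Lam L1 L2)"
proof -
  have "a - b \<in> Lam L1 L2" if ab: "a \<in> Lam L1 L2" "b \<in> Lam L1 L2" for a b
  proof -
    obtain y1 y2 z1 z2 where "L1 *v a = L2 *v y1" "L2 *v a = L1 *v y2"
      "L1 *v b = L2 *v z1" "L2 *v b = L1 *v z2"
      using ab unfolding Lam_def by blast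
    then have "L1 *v (a - b) = L2 *v (y1 - z1)" "L2 *v (a - b) = L1 *v (y2 - z2)"
      by (simp_all add: matrix_vector_mult_diff_distrib)
    then show ?thesis unfolding Lam_def by blast
  qed
  moreover have "0 \<in> Lam L1 L2"
    unfolding Lam_def by (auto intro!: exI[of _ 0])
  ultimately show ?thesis
    unfolding add_subgroup_def by blast
qed

lemma Gam1_subset_Lam: "Gam1 L1 L2 \<subseteq> Lam L1 L2"
  unfolding Gam1_def by auto

lemma add_subgroup_Gam1: "add_subgroup (Gam1 L1 L2)"
proof -
  have "a - b \<in> Gam1 L1 L2" if ab: "a \<in> Gam1 L1 L2" "b \<in> Gam1 L1 L2" for a b
  proof -
    obtain y z where "y \<in> Lam L1 L2" "L2 *v a = L1 *v y" "a \<in> Lam L1 L2"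
      "z \<in> Lam L1 L2" "L2 *v b = L1 *v z" "b \<in> Lam L1 L2"
      using ab unfolding Gam1_def by blast
    then show ?thesis
      unfolding Gam1_def using add_subgroup_diff[OF add_subgroup_Lam]
      by (auto simp: matrix_vector_mult_diff_distrib intro!: bexI[of _ "y - z"])
  qed
  moreover have "0 \<in> Gam1 L1 L2"
    unfolding Gam1_def using add_subgroup_zero[OF add_subgroup_Lam] by force
  ultimately show ?thesis
    unfolding add_subgroup_def by blast
qed

lemma add_subgroup_matrix_image:
  fixes L :: "'a::ring_1^'n^'m"
  assumes "add_subgroup H"
  shows "add_subgroup ((\<lambda>y. L *v y) ` H)"
proof -
  have "L *v a - L *v b \<in> (\<lambda>y. L *v y) ` H" if "a \<in> H" "b \<in> H" for a b
    using add_subgroup_diff[OF assms that]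
    by (auto simp: matrix_vector_mult_diff_distrib intro!: image_eqI[of _ _ "a - b"])
  then show ?thesis
    using add_subgroup_zero[OF assms] unfolding add_subgroup_def
    by (auto intro!: image_eqI[of _ _ 0])
qed

locale matrix_pair =
  fixes L1 L2 :: "int^'n^'n"
begin

abbreviation "\<Lambda> \<equiv> Lam L1 L2"
abbreviation "\<Gamma> \<equiv> Gam1 L1 L2"
abbreviation "M \<equiv> (\<lambda>y. L1 *v y) ` \<Lambda>"

lemma add_subgroup_M: "add_subgroup M"
  by (rule add_subgroup_matrix_image[OF add_subgroup_Lam])

lemmas M_zero = add_subgroup_zero[OF add_subgroup_M]
  and M_add = add_subgroup_add[OF add_subgroup_M]
  and M_diff = add_subgroup_diff[OF add_subgroup_M]
  and M_uminus = add_subgroup_uminus[OF add_subgroup_M]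

lemma LamI: "L1 *v x = L2 *v y \<Longrightarrow> L2 *v x = L1 *v z \<Longrightarrow> x \<in> \<Lambda>"
  unfolding Lam_def by auto

lemma LamE:
  assumes "x \<in> \<Lambda>"
  obtains y z where "L1 *v x = L2 *v y" "L2 *v x = L1 *v z"
  using assms unfolding Lam_def by auto

definition psi :: "int^'n \<Rightarrow> int^'n" where
  "psi x = L1 *v x + L2 *v x"

lemma psi_diff: "psi (x - y) = psi x - psi y"
  by (simp add: psi_def algebra_simps)

lemma psi_add: "psi (x + y) = psi x + psi y"
  by (simp add: psi_def algebra_simps)

text \<open>This is the injectivity of \<open>\<phi>\<^sub>1 + \<phi>\<^sub>2 : G \<rightarrow> \<int>\<^sup>d / L\<^sub>1\<Lambda>\<close>.\<close>
lemma psi_mem_M_iff: "psi w \<in> M \<longleftrightarrow> w \<in> \<Gamma>"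
proof
  assume "psi w \<in> M"
  then obtain l where l: "l \<in> \<Lambda>" "L1 *v w + L2 *v w = L1 *v l"
    unfolding psi_def by auto
  obtain y1 y2 where y: "L1 *v l = L2 *v y1" "L2 *v l = L1 *v y2"
    using l(1) by (rule LamE)
  have w: "L2 *v w = L1 *v (l - w)"
    using l(2) by (simp add: algebra_simps)
  have "w \<in> \<Lambda>"
    by (rule LamI[of _ "y1 - w"], use l(2) y in \<open>simp add: algebra_simps\<close>) (rule w)
  moreover have "l - w \<in> \<Lambda>"
    by (rule LamI[of _ w "y2 - (l - w)"], use l(2) y in \<open>simp_all add: algebra_simps\<close>)
  ultimately show "w \<in> \<Gamma>"
    unfolding Gam1_def using w by blast
next
  assume "w \<in> \<Gamma>"
  then obtain y where y: "y \<in> \<Lambda>" "L2 *v w = L1 *v y" "w \<in> \<Lambda>"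
    unfolding Gam1_def by auto
  then have "psi w = L1 *v (w + y)"
    by (simp add: psi_def algebra_simps)
  then show "psi w \<in> M"
    using add_subgroup_add[OF add_subgroup_Lam y(3,1)] by blast
qed

text \<open>\<open>tau x z\<close> says \<open>\<psi> z = \<phi>\<^sub>1 x\<close> with \<open>\<psi> = \<phi>\<^sub>1 + \<phi>\<^sub>2\<close>, i.e.\ \<open>z\<close> represents
  \<open>T x\<close> for the endomorphism \<open>T = \<psi>\<^sup>-\<^sup>1 \<circ> \<phi>\<^sub>1\<close> of \<open>G\<close>.\<close>
definition tau :: "int^'n \<Rightarrow> int^'n \<Rightarrow> bool" where
  "tau x z \<longleftrightarrow> L1 *v x - psi z \<in> M"

lemma tau_zero: "tau 0 0"
  by (simp add: tau_def psi_def M_zero)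

lemma tau_add: "tau a b \<Longrightarrow> tau c d \<Longrightarrow> tau (a + c) (b + d)"
  unfolding tau_def by (drule (1) M_add) (simp add: psi_add algebra_simps)

lemma tau_diff: "tau a b \<Longrightarrow> tau c d \<Longrightarrow> tau (a - c) (b - d)"
  unfolding tau_def by (drule (1) M_diff) (simp add: psi_diff algebra_simps)

lemma tau_unique: "tau a s \<Longrightarrow> tau a t \<Longrightarrow> s - t \<in> \<Gamma>"
  unfolding tau_def by (drule (1) M_diff) (simp add: psi_diff flip: psi_mem_M_iff)

lemma tau_shift:
  assumes "tau a b" "k \<in> \<Gamma>"
  shows "tau (a + k) b"
proof -
  have "L1 *v k \<in> M" using assms(2) Gam1_subset_Lam by blast
  with assms(1) have "(L1 *v a - psi b) + L1 *v k \<in> M"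
    unfolding tau_def by (rule M_add)
  then show ?thesis unfolding tau_def by (simp add: algebra_simps)
qed

lemma tau_Lam_zero: "l \<in> \<Lambda> \<Longrightarrow> tau l 0"
  by (auto simp: tau_def psi_def)

lemma tau_Lam: "l \<in> \<Lambda> \<Longrightarrow> L2 *v l = L1 *v g \<Longrightarrow> tau g l"
  unfolding tau_def psi_def by (auto simp: algebra_simps intro: M_uminus)

text \<open>The image of \<open>T\<^sup>2\<close> lies in the kernel of \<open>\<phi>\<^sub>2\<close>, on which \<open>T\<close> is the identity.\<close>
lemma tau_tau_fixed:
  assumes "tau x u" "tau u w"
  shows "tau w w"
proof -
  obtain a where a: "a \<in> \<Lambda>" "L1 *v x - psi u = L1 *v a"
    using assms(1) unfolding tau_def by auto
  obtain b where b: "b \<in> \<Lambda>" "L1 *v u - psi w = L1 *v b"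
    using assms(2) unfolding tau_def by auto
  obtain b' where b': "L2 *v b = L1 *v b'"
    using b(1) by (rule LamE)
  define m where "m = u - w - b"
  have m: "L2 *v w = L1 *v m"
    using b(2) unfolding m_def psi_def by (simp add: algebra_simps)
  have u: "L2 *v u = L1 *v (x - u - a)"
    using a(2) unfolding psi_def by (simp add: algebra_simps)
  have "L2 *v m = L2 *v u - L2 *v w - L2 *v b"
    by (simp add: m_def algebra_simps)
  also have "\<dots> = L1 *v (x - u - a - m - b')"
    using m u b' by (simp add: algebra_simps)
  finally have "L2 *v m = L1 *v (x - u - a - m - b')" .
  then have "m \<in> \<Lambda>"
    by (rule LamI[OF m[symmetric]])
  then show ?thesis
    unfolding tau_def psi_def using m M_uminus by auto
qed

end

locale closed_sumset = matrix_pair L1 L2 for L1 L2 :: "int^'n^'n" +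
  fixes A :: "(int^'n) set" and m :: nat
  assumes L1_inj: "inj ((*v) L1)"
    and sumset_closed: "x \<in> A \<Longrightarrow> y \<in> A \<Longrightarrow> \<exists>z\<in>A. L1 *v x + L2 *v y - psi z \<in> M"
    and Gam1_closed: "x \<in> A \<Longrightarrow> k \<in> \<Gamma> \<Longrightarrow> x + k \<in> A"
    and zero_mem: "0 \<in> A"
    and m_pos: "m > 0"
    and m_mult_mem_Gam1: "int m *s x \<in> \<Gamma>"
begin

lemma mem_if_coset_mem:
  assumes "coset \<Gamma> x \<in> coset \<Gamma> ` A"
  shows "x \<in> A"
proof -
  obtain a where "a \<in> A" "x - a \<in> \<Gamma>"
    using assms by (auto simp: coset_eq_iff[OF add_subgroup_Gam1])
  then show ?thesis using Gam1_closed[of a "x - a"] by simp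
qed

lemma mem_Lam_if_L1_mem_M: "L1 *v s \<in> M \<Longrightarrow> s \<in> \<Lambda>"
  using L1_inj by (auto dest: injD)

lemma tau_exists: "x \<in> A \<Longrightarrow> \<exists>u\<in>A. tau x u"
  using sumset_closed[OF _ zero_mem] by (simp add: tau_def)

lemma diff_tau_tau_mem:
  assumes x: "x \<in> A" and xu: "tau x u" and uw: "tau u w"
  shows "x - w \<in> A"
proof -
  obtain v where v: "v \<in> A" "L2 *v x - psi v \<in> M"
    using sumset_closed[OF zero_mem x] by auto
  obtain z where z: "z \<in> A" "L1 *v v + L2 *v x - psi z \<in> M"
    using sumset_closed[OF v(1) x] by auto
  have "psi (u + v - x) = - (L1 *v x - psi u) - (L2 *v x - psi v)"
    by (simp add: psi_def algebra_simps)
  then have "u + v - x \<in> \<Gamma>"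
    using M_diff[OF M_uminus[OF xu[unfolded tau_def]] v(2)] by (simp flip: psi_mem_M_iff)
  then have "L1 *v (u + v - x) \<in> M"
    using Gam1_subset_Lam by blast
  moreover have "psi (z - (x - w)) =
      - (L1 *v v + L2 *v x - psi z) - (L1 *v u - psi w) + L1 *v (u + v - x)"
    by (simp add: psi_def algebra_simps)
  ultimately have "z - (x - w) \<in> \<Gamma>"
    using M_add[OF M_diff[OF M_uminus[OF z(2)] uw[unfolded tau_def]]]
    by (simp flip: psi_mem_M_iff)
  then show ?thesis
    using Gam1_closed[OF z(1) add_subgroup_uminus[OF add_subgroup_Gam1]] by force
qed

lemma tau_add_mem:
  assumes "tau a s" "s \<in> A" "s \<in> \<Lambda>" "x \<in> A"
  shows "\<exists>s'\<in>A. tau (a + x) s'"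
proof -
  obtain s' where s': "s' \<in> A" "L1 *v x + L2 *v s - psi s' \<in> M"
    using sumset_closed[OF assms(4,2)] by blast
  have eq: "L1 *v (a + x) - psi s' = (L1 *v a - psi s) + (L1 *v x + L2 *v s - psi s') + L1 *v s"
    by (simp add: psi_def[of s] algebra_simps)
  have "L1 *v s \<in> M" using assms(3) by blast
  then have "tau (a + x) s'"
    unfolding tau_def eq by (intro M_add[OF M_add[OF assms(1)[unfolded tau_def] s'(2)]])
  then show ?thesis using s'(1) by blast
qed

text \<open>\<open>good y\<close> says \<open>T (y - T\<^sup>2 y) \<in> A\<close>.\<close>
definition good :: "int^'n \<Rightarrow> bool" where
  "good y \<longleftrightarrow> (\<exists>p q s. tau y p \<and> tau p q \<and> s \<in> A \<and> tau (y - q) s)"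

lemma good_zero: "good 0"
  unfolding good_def using tau_zero zero_mem by force

lemma good_witness_mem_Lam:
  assumes yp: "tau y p" and pq: "tau p q" and s: "tau (y - q) s"
  shows "s \<in> \<Lambda>"
proof -
  have qq: "tau q q" using tau_tau_fixed[OF yp pq] .
  have "s - (p - q) \<in> \<Gamma>"
    using tau_unique[OF s tau_diff[OF yp qq]] .
  moreover have "tau (p - q) 0"
    using tau_diff[OF pq qq] by simp
  then have "p - q \<in> \<Lambda>"
    by (intro mem_Lam_if_L1_mem_M) (simp add: tau_def psi_def)
  ultimately have "(p - q) + (s - (p - q)) \<in> \<Lambda>"
    using add_subgroup_add[OF add_subgroup_Lam] Gam1_subset_Lam by blast
  then show ?thesis by simp
qed

lemma good_shift: "good y \<Longrightarrow> k \<in> \<Gamma> \<Longrightarrow> good (y + k)"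
  unfolding good_def using tau_shift
  by (metis add_diff_eq diff_add_eq)

lemma good_add:
  assumes "good y" "x \<in> A"
  shows "good (y + x)"
proof -
  obtain p q s where pqs: "tau y p" "tau p q" "s \<in> A" "tau (y - q) s"
    using assms(1) unfolding good_def by blast
  obtain u where u: "u \<in> A" "tau x u" using tau_exists[OF assms(2)] by blast
  obtain w where w: "tau u w" using tau_exists[OF u(1)] by blast
  have "x - w \<in> A" using diff_tau_tau_mem[OF assms(2) u(2) w] .
  moreover have "s \<in> \<Lambda>" using good_witness_mem_Lam[OF pqs(1,2,4)] .
  ultimately obtain s' where "s' \<in> A" "tau ((y - q) + (x - w)) s'"
    using tau_add_mem[OF pqs(4,3)] by blast
  moreover have "(y - q) + (x - w) = (y + x) - (q + w)" by simp
  ultimately show ?thesis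
    unfolding good_def using tau_add[OF pqs(1) u(2)] tau_add[OF pqs(2) w] by metis
qed

lemma good_add_multiple: "good y \<Longrightarrow> x \<in> A \<Longrightarrow> good (y + int n *s x)"
proof (induction n)
  case (Suc n)
  then have "good ((y + int n *s x) + x)" using good_add by blast
  then show ?case by (simp add: vec_eq_iff algebra_simps)
qed simp

text \<open>Subtracting \<open>x\<close> is adding \<open>(m - 1) x\<close> up to \<open>m x \<in> \<Gamma>\<close>.\<close>
lemma good_diff:
  assumes "good y" "x \<in> A"
  shows "good (y - x)"
proof -
  have "good ((y + int (m - 1) *s x) + (- (int m *s x)))"
    using good_add_multiple[OF assms] good_shift
      add_subgroup_uminus[OF add_subgroup_Gam1 m_mult_mem_Gam1] by blast
  moreover have "(y + int (m - 1) *s x) + (- (int m *s x)) = y - x"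
    using m_pos by (simp add: vec_eq_iff algebra_simps of_nat_diff)
  ultimately show ?thesis by metis
qed

lemma good_coset_cong: "good y' \<Longrightarrow> coset \<Gamma> y' = coset \<Gamma> y \<Longrightarrow> good y"
  using good_shift[of y' "y - y'"] add_subgroup_uminus[OF add_subgroup_Gam1, of "y' - y"]
  by (simp add: coset_eq_iff[OF add_subgroup_Gam1])

lemma good_if_generated:
  "c \<in> qgen \<Gamma> (coset \<Gamma> ` A) \<Longrightarrow> c = coset \<Gamma> y \<Longrightarrow> good y"
proof (induction arbitrary: y rule: qgen.induct)
  case zero
  then show ?case by (rule good_coset_cong[OF good_zero])
next
  case (add x y')
  have "good (y' + x)"
    using good_add add.IH mem_if_coset_mem[OF add.hyps(1)] by blast
  then show ?case by (rule good_coset_cong[OF _ add.prems])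
next
  case (sub x y')
  have "good (y' - x)"
    using good_diff sub.IH mem_if_coset_mem[OF sub.hyps(1)] by blast
  then show ?case by (rule good_coset_cong[OF _ sub.prems])
qed

lemma Lam_subset_if_generating:
  assumes "qgen \<Gamma> (coset \<Gamma> ` A) = quot UNIV \<Gamma>"
  shows "\<Lambda> \<subseteq> A"
proof
  fix l assume l: "l \<in> \<Lambda>"
  obtain g where g: "L2 *v l = L1 *v g" using l by (rule LamE)
  have "good g"
    using good_if_generated assms unfolding quot_def by blast
  then obtain p q s where pqs: "tau g p" "tau p q" "s \<in> A" "tau (g - q) s"
    unfolding good_def by blast
  have gl: "tau g l" using tau_Lam[OF l g] .
  have "tau (p + (l - p)) q"
    using tau_shift[OF pqs(2) tau_unique[OF gl pqs(1)]] .
  then have "q \<in> \<Gamma>"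
    using tau_unique[OF _ tau_Lam_zero[OF l]] by fastforce
  then have "tau g s"
    using tau_shift[OF pqs(4)] by fastforce
  then have "s - l \<in> \<Gamma>"
    using tau_unique[OF _ gl] by blast
  then show "l \<in> A"
    using Gam1_closed[OF pqs(3) add_subgroup_uminus[OF add_subgroup_Gam1]] by force
qed

end

lemma matrix_vector_mult_scalar_commute:
  fixes A :: "'a::comm_ring_1^'n^'m"
  shows "A *v (c *s x) = c *s (A *v x)"
  by (simp add: vec_eq_iff matrix_vector_mult_def sum_distrib_left algebra_simps)

definition of_int_vec :: "int^'n \<Rightarrow> rat^'n" where
  "of_int_vec x = (\<chi> i. of_int (x $ i))"

lemma ratmat_mult_of_int_vec: "ratmat L *v of_int_vec x = of_int_vec (L *v x)"
  by (simp add: vec_eq_iff of_int_vec_def ratmat_def matrix_vector_mult_def)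

lemma of_int_vec_inject: "of_int_vec x = of_int_vec y \<longleftrightarrow> x = y"
  by (simp add: vec_eq_iff of_int_vec_def)

lemma of_int_vec_scale: "of_int_vec (c *s x) = of_int c *s of_int_vec x"
  by (simp add: vec_eq_iff of_int_vec_def)

lemma rat_denominator_mult_Ints: "of_int (snd (quotient_of q)) * q \<in> \<int>"
proof -
  obtain n d where nd: "quotient_of q = (n, d)" by fastforce
  then have "of_int d * q = of_int n"
    using quotient_of_denom_pos[OF nd] by (simp add: quotient_of_div[OF nd])
  then show ?thesis using nd by simp
qed

lemma rat_matrix_common_denominator:
  fixes N :: "rat^'n^'m"
  obtains c :: int where "c > 0" "\<And>i j. of_int c * N $ i $ j \<in> \<int>"
proof
  define d where "d = (\<lambda>(i, j). snd (quotient_of (N $ i $ j)))"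
  have d: "d (i, j) > 0" "of_int (d (i, j)) * N $ i $ j \<in> \<int>" for i j
    unfolding d_def using quotient_of_denom_pos' rat_denominator_mult_Ints by auto
  show "(\<Prod>p\<in>UNIV. d p) > 0"
    using d(1) by (auto intro: prod_pos)
  fix i j
  have "(\<Prod>p\<in>UNIV. d p) = (\<Prod>p\<in>UNIV - {(i, j)}. d p) * d (i, j)"
    by (simp add: prod.remove mult.commute)
  then show "of_int (\<Prod>p\<in>UNIV. d p) * N $ i $ j \<in> \<int>"
    using Ints_mult[OF Ints_of_int[of "\<Prod>p\<in>UNIV - {(i, j)}. d p"] d(2)[of i j]]
    by (simp add: mult.assoc)
qed

lemma inj_int_matrix_if_det_nonzero:
  fixes L :: "int^'n^'n"
  assumes "det (ratmat L) \<noteq> 0"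
  shows "inj ((*v) L)"
proof (rule injI)
  obtain N where N: "N ** ratmat L = mat 1"
    using assms by (metis invertible_det_nz invertible_left_inverse)
  fix x y assume "L *v x = L *v y"
  then have "N *v (ratmat L *v of_int_vec x) = N *v (ratmat L *v of_int_vec y)"
    by (simp add: ratmat_mult_of_int_vec)
  then show "x = y"
    by (simp add: matrix_vector_mul_assoc N of_int_vec_inject)
qed

lemma int_matrix_range_contains_multiples:
  fixes L :: "int^'n^'n"
  assumes "det (ratmat L) \<noteq> 0"
  obtains c :: int where "c > 0" "\<And>z. \<exists>y. L *v y = c *s z"
proof -
  obtain N where N: "ratmat L ** N = mat 1"
    using assms by (metis invertible_det_nz invertible_right_inverse)
  obtain c where c: "c > 0" "\<And>i j. of_int c * N $ i $ j \<in> \<int>"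
    using rat_matrix_common_denominator[of N] by blast
  define L' :: "int^'n^'n" where "L' = (\<chi> i j. \<lfloor>of_int c * N $ i $ j\<rfloor>)"
  have "ratmat L' = (\<chi> i j. of_int c * N $ i $ j)"
    using c(2) by (simp add: ratmat_def L'_def vec_eq_iff)
  then have L': "ratmat L' *v w = of_int c *s (N *v w)" for w
    by (simp add: vec_eq_iff matrix_vector_mult_def sum_distrib_left mult.assoc)
  have "L *v (L' *v z) = c *s z" for z
  proof -
    have "of_int_vec (L *v (L' *v z)) = ratmat L *v (ratmat L' *v of_int_vec z)"
      by (simp add: ratmat_mult_of_int_vec)
    also have "\<dots> = of_int c *s ((ratmat L ** N) *v of_int_vec z)"
      by (simp add: L' vector_scalar_commute matrix_vector_mul_assoc)
    also have "\<dots> = of_int_vec (c *s z)"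
      by (simp add: N of_int_vec_scale)
    finally show ?thesis by (simp add: of_int_vec_inject)
  qed
  with c(1) show ?thesis using that by blast
qed

lemma det_zero_kernel:
  fixes A :: "'a::field^'n^'n"
  assumes "det A = 0"
  obtains v where "v \<noteq> 0" "A *v v = 0"
  using assms matrix_left_invertible_ker[of A]
  by (metis invertible_det_nz invertible_left_inverse)

lemma irreducible_pair_commute: "irreducible_pair L1 L2 \<longleftrightarrow> irreducible_pair L2 L1"
  unfolding irreducible_pair_def by blast

lemma span_singleton_proper:
  fixes v :: "rat^'n"
  assumes "v \<noteq> 0" "CARD('n) \<ge> 2"
  shows "vec.dim (vec.span {v}) = 1" "vec.span {v} \<noteq> {0}" "vec.span {v} \<noteq> UNIV"
proof -
  show d: "vec.dim (vec.span {v}) = 1"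
    using assms(1) by (simp add: vec.dim_span vec.dim_singleton)
  show "vec.span {v} \<noteq> {0}"
    using assms(1) vec.span_base[of v "{v}"] by auto
  show "vec.span {v} \<noteq> UNIV"
  proof
    assume "vec.span {v} = UNIV"
    then have "vec.dim (UNIV :: (rat^'n) set) = 1" using d by simp
    then show False using assms(2) by (simp add: vec.dim_UNIV card_cart_basis)
  qed
qed

text \<open>A kernel vector \<open>v\<close> of \<open>L\<^sub>1\<close> gives the reducing pair \<open>U = \<rat> v\<close>, \<open>V = \<rat> L\<^sub>2 v\<close>
  (or \<open>V = U\<close> if \<open>L\<^sub>2 v = 0\<close>).\<close>
lemma det_nonzero_if_irreducible_pair:
  fixes L1 L2 :: "int^'n^'n"
  assumes irr: "irreducible_pair L1 L2" and d: "CARD('n) \<ge> 2"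
  shows "det (ratmat L1) \<noteq> 0"
proof
  assume "det (ratmat L1) = 0"
  then obtain v where v: "v \<noteq> 0" "ratmat L1 *v v = 0"
    by (rule det_zero_kernel)
  define w where "w = (if ratmat L2 *v v = 0 then v else ratmat L2 *v v)"
  have w: "w \<noteq> 0" using v unfolding w_def by auto
  have "(\<lambda>u. ratmat L1 *v u) ` vec.span {v} \<subseteq> vec.span {w}"
    using v(2) by (auto simp: vec.span_singleton vector_scalar_commute)
  moreover have "(\<lambda>u. ratmat L2 *v u) ` vec.span {v} \<subseteq> vec.span {w}"
    unfolding w_def by (auto simp: vec.span_singleton vector_scalar_commute)
  ultimately show False
    using irr span_singleton_proper[OF v(1) d] span_singleton_proper[OF w d]
    unfolding irreducible_pair_def by (metis vec.subspace_span)
qed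

lemma int_matrix_zero_if_det_zero_dim1:
  fixes L :: "int^'n^'n"
  assumes "CARD('n) = 1" "det (ratmat L) = 0"
  shows "L *v x = 0"
proof -
  obtain a :: 'n where a: "UNIV = {a}"
    using card_1_singletonE[OF assms(1)] by blast
  obtain v where v: "v \<noteq> 0" "ratmat L *v v = 0"
    using assms(2) by (rule det_zero_kernel)
  have "v $ a \<noteq> 0" using v(1) a by (auto simp: vec_eq_iff)
  moreover have "(ratmat L *v v) $ a = of_int (L $ a $ a) * v $ a"
    by (simp add: matrix_vector_mult_def ratmat_def a)
  ultimately have "L $ a $ a = 0" using v(2) by simp
  moreover have "i = a" for i using a by blast
  ultimately show ?thesis
    by (simp add: vec_eq_iff matrix_vector_mult_def a) metis
qed

context matrix_pair
begin

lemma multiples_mem_Gam1_M: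
  assumes "det (ratmat L1) \<noteq> 0" "det (ratmat L2) \<noteq> 0"
  obtains c :: int where "c > 0" "\<And>z. c *s z \<in> \<Gamma>" "\<And>z. c *s z \<in> M"
proof -
  obtain c1 c2 :: int where c: "c1 > 0" "\<And>z. \<exists>y. L1 *v y = c1 *s z"
    "c2 > 0" "\<And>z. \<exists>y. L2 *v y = c2 *s z"
    using int_matrix_range_contains_multiples assms by metis
  define b where "b = c1 * c2"
  have range1: "\<exists>y. L1 *v y = b *s z" for z
    using c(2)[of "c2 *s z"] by (simp add: b_def vector_smult_assoc)
  have range2: "\<exists>y. L2 *v y = b *s z" for z
    using c(4)[of "c1 *s z"] by (simp add: b_def vector_smult_assoc mult.commute)
  have Lam: "b *s z \<in> \<Lambda>" for z
    using range1[of "L2 *v z"] range2[of "L1 *v z"]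
    by (metis LamI matrix_vector_mult_scalar_commute)
  have Gam: "(b * b) *s z \<in> \<Gamma>" for z
  proof -
    obtain y where y: "L1 *v y = b *s (L2 *v z)" using range1 by blast
    have "L2 *v ((b * b) *s z) = L1 *v (b *s y)"
      by (simp add: y matrix_vector_mult_scalar_commute vector_smult_assoc)
    then show ?thesis
      unfolding Gam1_def using Lam[of "b *s z"] Lam[of y] by (auto simp: vector_smult_assoc)
  qed
  show ?thesis
  proof
    show "b * b * b > 0" using c(1,3) by (simp add: b_def)
    show "(b * b * b) *s z \<in> \<Gamma>" for z
      using Gam[of "b *s z"] by (simp add: vector_smult_assoc mult.assoc)
    show "(b * b * b) *s z \<in> M" for z
    proof -
      obtain y where "L1 *v y = b *s z" using range1 by blast
      then have "(b * b * b) *s z = L1 *v ((b * b) *s y)"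
        by (simp add: matrix_vector_mult_scalar_commute vector_smult_assoc mult.assoc)
      then show ?thesis using Gam1_subset_Lam Gam[of y] by blast
    qed
  qed
qed

lemma card_psi_cosets: "card ((\<lambda>x. coset M (psi x)) ` A) = card (coset \<Gamma> ` A)"
  by (rule card_image_eq_if_same_fibres)
     (simp add: coset_eq_iff[OF add_subgroup_M] coset_eq_iff[OF add_subgroup_Gam1]
       flip: psi_diff psi_mem_M_iff)

lemma psi_cosets_subset_sumset:
  "(\<lambda>x. coset M (psi x)) ` {x. coset \<Gamma> x \<in> X}
     \<subseteq> qsumset M (phi_img L1 L2 L1 X) (phi_img L1 L2 L2 X)"
  unfolding qsumset_def phi_img_def psi_def by blast

text \<open>A sumset no larger than \<open>X\<close> equals \<open>\<psi>(X)\<close>; this is the closure hypothesis of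
  \<open>closed_sumset\<close> for the representatives of \<open>X\<close>.\<close>
lemma quot_Lam_subset_if_small_sumset:
  assumes det: "det (ratmat L1) \<noteq> 0" "det (ratmat L2) \<noteq> 0"
    and XG: "X \<subseteq> quot UNIV \<Gamma>"
    and X0: "coset \<Gamma> 0 \<in> X"
    and gen: "qgen \<Gamma> X = quot UNIV \<Gamma>"
    and small: "card (qsumset M (phi_img L1 L2 L1 X) (phi_img L1 L2 L2 X)) \<le> card X"
  shows "quot \<Lambda> \<Gamma> \<subseteq> X"
proof -
  obtain c where c: "c > 0" "\<And>z. c *s z \<in> \<Gamma>" "\<And>z. c *s z \<in> M"
    using multiples_mem_Gam1_M[OF det] by blast
  define A where "A = {x. coset \<Gamma> x \<in> X}"
  define S where "S = qsumset M (phi_img L1 L2 L1 X) (phi_img L1 L2 L2 X)"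
  have X_eq: "X = coset \<Gamma> ` A"
    using XG unfolding A_def quot_def by auto
  have "finite X"
    using finite_range_coset[OF add_subgroup_Gam1 c(1,2)] XG
    unfolding quot_def by (rule finite_subset[rotated])
  have "S \<subseteq> range (coset M)"
    unfolding S_def qsumset_def by auto
  then have "finite S"
    using finite_range_coset[OF add_subgroup_M c(1,3)] by (rule finite_subset)
  then have S_eq: "(\<lambda>x. coset M (psi x)) ` A = S"
    using psi_cosets_subset_sumset small card_psi_cosets
    unfolding A_def S_def by (metis X_eq[unfolded A_def] card_seteq)
  have "\<exists>z\<in>A. L1 *v x + L2 *v y - psi z \<in> M" if "x \<in> A" "y \<in> A" for x y
  proof -
    have "coset M (L1 *v x + L2 *v y) \<in> S"
      using that unfolding S_def qsumset_def phi_img_def A_def by blast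
    then obtain z where "z \<in> A" "coset M (L1 *v x + L2 *v y) = coset M (psi z)"
      unfolding S_eq[symmetric] by blast
    then show ?thesis using coset_eq_iff[OF add_subgroup_M] by blast
  qed
  moreover have "x + k \<in> A" if "x \<in> A" "k \<in> \<Gamma>" for x k
    using that coset_eq_iff[OF add_subgroup_Gam1[of L1 L2], of "x + k" x] unfolding A_def by simp
  ultimately interpret closed_sumset L1 L2 A "nat c"
    using inj_int_matrix_if_det_nonzero[OF det(1)] X0 c(1,2)
    by unfold_locales (auto simp: A_def)
  have "\<Lambda> \<subseteq> A"
    using Lam_subset_if_generating gen X_eq by simp
  then show ?thesis
    unfolding quot_def A_def by auto
qed

end

lemma Lam_subset_Gam1_if_zero:
  assumes "(\<forall>x. L1 *v x = 0) \<or> (\<forall>x. L2 *v x = 0)"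
  shows "Lam L1 L2 \<subseteq> Gam1 L1 L2"
  using assms add_subgroup_zero[OF add_subgroup_Lam]
  unfolding Gam1_def Lam_def by force

lemma nonsingular_or_Lam_subset_Gam1:
  fixes L1 L2 :: "int^'n^'n"
  assumes "irreducible_pair L1 L2"
  shows "(det (ratmat L1) \<noteq> 0 \<and> det (ratmat L2) \<noteq> 0) \<or> Lam L1 L2 \<subseteq> Gam1 L1 L2"
proof (cases "CARD('n) \<ge> 2")
  case True
  then show ?thesis
    using assms det_nonzero_if_irreducible_pair irreducible_pair_commute by blast
next
  case False
  then have "CARD('n) = 1"
    using zero_less_card_finite[where 'a='n] by linarith
  then show ?thesis
    using int_matrix_zero_if_det_zero_dim1 Lam_subset_Gam1_if_zero by blast
qed

lemma quot_subset_if_Lam_subset_Gam1: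
  assumes "Lam L1 L2 \<subseteq> Gam1 L1 L2" "coset (Gam1 L1 L2) 0 \<in> X"
  shows "quot (Lam L1 L2) (Gam1 L1 L2) \<subseteq> X"
proof (unfold quot_def, clarify)
  fix l assume "l \<in> Lam L1 L2"
  then have "coset (Gam1 L1 L2) l = coset (Gam1 L1 L2) 0"
    using assms(1) coset_eq_iff[OF add_subgroup_Gam1[of L1 L2]] by auto
  then show "coset (Gam1 L1 L2) l \<in> X" using assms(2) by simp
qed

theorem lemma4p4:
  fixes L1 L2 :: "int^'n^'n" and X :: "(int^'n) set set"
  assumes irr: "irreducible_pair L1 L2"
    and cop: "coprime_pair L1 L2"
    and XG: "X \<subseteq> quot UNIV (Gam1 L1 L2)"
    and X0: "coset (Gam1 L1 L2) 0 \<in> X"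
  shows "qgen (Gam1 L1 L2) X \<noteq> quot UNIV (Gam1 L1 L2)
      \<or> card (qsumset ((\<lambda>y. L1 *v y) ` Lam L1 L2)
               (phi_img L1 L2 L1 X) (phi_img L1 L2 L2 X)) > card X
      \<or> quot (Lam L1 L2) (Gam1 L1 L2) \<subseteq> X"
proof -
  interpret matrix_pair L1 L2 .
  consider "\<Lambda> \<subseteq> \<Gamma>" | "det (ratmat L1) \<noteq> 0" "det (ratmat L2) \<noteq> 0"
    using nonsingular_or_Lam_subset_Gam1[OF irr] by blast
  then show ?thesis
  proof cases
    case 1
    then show ?thesis using quot_subset_if_Lam_subset_Gam1 X0 by blast
  next
    case 2
    then show ?thesis
      using quot_Lam_subset_if_small_sumset[OF 2 XG X0] by fastforce
  qed
qed

end
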